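(* Let $\nu_2\le\nu_1$ and endow $\mathbb{F}_q^{\nu_1}$ and $\mathbb{F}_q^{\nu_2}$ with the Hamming weight $\operatorname{wt}_H$. If $\psi:\mathbb{F}_q^{\nu_1}\to\mathbb{F}_q^{\nu_2}$ is a surjective weakly row monomial linear map, then $\operatorname{wt}_{\mathrm{quot},\psi}=\operatorname{wt}_H$ on $\mathbb{F}_q^{\nu_2}$.
   Context: A linear map $\psi:\mathbb{F}_q^{\nu_1}\to\mathbb{F}_q^{\nu_2}$ is weakly row monomial if for each standard basis vector $e_i$ of $\mathbb{F}_q^{\nu_1}$, $\psi(e_i)=\lambda_ie'_{j_i}$ for some (possibly zero) $\lambda_i\in\mathbb{F}_q$ and some standard basis vector $e'_{j_i}$ of $\mathbb{F}_q^{\nu_2}$. The quotient weight is $\operatorname{wt}_{\mathrm{quot},\psi}(y)=\min\{\operatorname{wt}_H(x):x\in\psi^{-1}(y)\}$. *)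

theory Defs
  imports "HOL-Analysis.Analysis"
begin

definition hamming_wt :: "'a::zero ^ 'n \<Rightarrow> nat" where
  "hamming_wt x = card {i. x $ i \<noteq> 0}"

definition weakly_row_monomial :: "('a::field ^ 'm \<Rightarrow> 'a ^ 'n) \<Rightarrow> bool" where
  "weakly_row_monomial psi \<longleftrightarrow>
     (\<forall>i. \<exists>(lam::'a) j. psi (axis i 1) = lam *s axis j 1)"

definition quot_wt :: "('a::zero ^ 'm \<Rightarrow> 'b ^ 'n) \<Rightarrow> 'b ^ 'n \<Rightarrow> nat" where
  "quot_wt psi y = Min (hamming_wt ` (psi -` {y}))"

end

theory Submission
  imports Defs
begin

text \<open>A weakly row monomial map sends each coordinate \<open>i\<close> of the source, scaled by \<open>\<lambda>\<^sub>i\<close>,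
  to a single coordinate \<open>J i\<close> of the target. Hence \<open>\<psi>\<close> cannot create nonzero entries, so
  \<open>wt\<^sub>H (\<psi> x) \<le> wt\<^sub>H x\<close>. Conversely, surjectivity forces every target coordinate \<open>j\<close> to be hit
  by some \<open>i\<close> with \<open>\<lambda>\<^sub>i \<noteq> 0\<close>; choosing one such \<open>i\<close> per \<open>j\<close> lifts any \<open>y\<close> to a preimage with
  the same support size as \<open>y\<close>.\<close>

lemma weakly_row_monomialE:
  assumes "weakly_row_monomial psi"
  obtains lam J where "\<And>i. psi (axis i 1) = lam i *s axis (J i) 1"
  using assms unfolding weakly_row_monomial_def by metis

lemma row_monomial_component:
  fixes psi :: "'a::field ^ 'm \<Rightarrow> 'a ^ 'n"
  assumes lin: "Vector_Spaces.linear (*s) (*s) psi"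
    and J: "\<And>i. psi (axis i 1) = lam i *s axis (J i) 1"
  shows "psi x $ j = (\<Sum>i\<in>{i. J i = j}. x $ i * lam i)"
proof -
  have hom: "module_hom (*s) (*s) psi"
    using lin by (simp add: linear_iff_module_hom)
  have "psi x = psi (\<Sum>i\<in>UNIV. (x $ i) *s axis i 1)"
    by (simp add: basis_expansion)
  also have "\<dots> = (\<Sum>i\<in>UNIV. (x $ i) *s psi (axis i 1))"
    by (simp add: module_hom.sum[OF hom] module_hom.scale[OF hom])
  finally have "psi x $ j = (\<Sum>i\<in>UNIV. x $ i * (lam i * (if j = J i then 1 else 0)))"
    by (simp add: J sum_component) (simp add: axis_def mult.assoc)
  also have "\<dots> = (\<Sum>i\<in>UNIV. if J i = j then x $ i * lam i else 0)"
    by (rule sum.cong) auto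
  also have "\<dots> = (\<Sum>i\<in>{i. J i = j}. x $ i * lam i)"
    by (simp add: sum.inter_filter[symmetric])
  finally show ?thesis .
qed

lemma hamming_wt_row_monomial_le:
  fixes psi :: "'a::field ^ 'm \<Rightarrow> 'a ^ 'n"
  assumes lin: "Vector_Spaces.linear (*s) (*s) psi"
    and "weakly_row_monomial psi"
  shows "hamming_wt (psi x) \<le> hamming_wt x"
proof -
  obtain lam J where J: "\<And>i. psi (axis i 1) = lam i *s axis (J i) 1"
    using assms(2) by (auto elim: weakly_row_monomialE)
  have "{j. psi x $ j \<noteq> 0} \<subseteq> J ` {i. x $ i \<noteq> 0}"
  proof
    fix j assume "j \<in> {j. psi x $ j \<noteq> 0}"
    then have "(\<Sum>i\<in>{i. J i = j}. x $ i * lam i) \<noteq> 0"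
      by (simp add: row_monomial_component[OF lin J])
    then obtain i where "J i = j" "x $ i * lam i \<noteq> 0"
      by (metis (mono_tags, lifting) mem_Collect_eq sum.neutral)
    then show "j \<in> J ` {i. x $ i \<noteq> 0}" by auto
  qed
  then have "card {j. psi x $ j \<noteq> 0} \<le> card (J ` {i. x $ i \<noteq> 0})"
    by (intro card_mono) auto
  also have "\<dots> \<le> card {i. x $ i \<noteq> 0}"
    by (rule card_image_le) auto
  finally show ?thesis unfolding hamming_wt_def .
qed

lemma surj_row_monomial_hits_every_coordinate:
  fixes psi :: "'a::field ^ 'm \<Rightarrow> 'a ^ 'n"
  assumes lin: "Vector_Spaces.linear (*s) (*s) psi"
    and J: "\<And>i. psi (axis i 1) = lam i *s axis (J i) 1"
    and "surj psi"
  shows "\<exists>i. J i = j \<and> lam i \<noteq> 0"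
proof (rule ccontr)
  assume none: "\<not> ?thesis"
  obtain x where "psi x = axis j 1"
    using \<open>surj psi\<close> by (metis surj_def)
  then have "psi x $ j = 1" by simp
  moreover have "psi x $ j = 0"
    unfolding row_monomial_component[OF lin J] using none by (intro sum.neutral) auto
  ultimately show False by simp
qed

lemma surj_row_monomial_preimage_same_hamming_wt:
  fixes psi :: "'a::field ^ 'm \<Rightarrow> 'a ^ 'n"
  assumes lin: "Vector_Spaces.linear (*s) (*s) psi"
    and "surj psi"
    and "weakly_row_monomial psi"
  obtains x where "psi x = y" and "hamming_wt x = hamming_wt y"
proof -
  obtain lam J where J: "\<And>i. psi (axis i 1) = lam i *s axis (J i) 1"
    using assms(3) by (auto elim: weakly_row_monomialE)
  obtain I where I: "\<And>j. J (I j) = j" "\<And>j. lam (I j) \<noteq> 0"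
    using surj_row_monomial_hits_every_coordinate[OF lin J \<open>surj psi\<close>] by metis
  have "inj I" by (metis I(1) injI)
  define x :: "'a ^ 'm" where "x = (\<chi> i. if I (J i) = i then y $ J i / lam i else 0)"
  have "psi x $ j = y $ j" for j
  proof -
    have "psi x $ j = (\<Sum>i\<in>{i. J i = j}. x $ i * lam i)"
      by (rule row_monomial_component[OF lin J])
    also have "\<dots> = (\<Sum>i\<in>{i. J i = j}. if i = I j then y $ j else 0)"
      by (rule sum.cong) (auto simp: x_def I)
    also have "\<dots> = y $ j"
      using I(1)[of j] by (simp add: sum.delta)
    finally show ?thesis .
  qed
  then have "psi x = y" by (simp add: vec_eq_iff)
  moreover have "{i. x $ i \<noteq> 0} = I ` {j. y $ j \<noteq> 0}"
    by (auto simp: x_def I image_iff split: if_splits) metis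
  then have "hamming_wt x = hamming_wt y"
    unfolding hamming_wt_def using card_image[OF inj_on_subset[OF \<open>inj I\<close>]] by simp
  ultimately show ?thesis by (rule that)
qed

lemma quot_wt_eqI:
  fixes psi :: "'a::{zero,finite} ^ 'm \<Rightarrow> 'b ^ 'n"
  assumes "psi x = y" and "hamming_wt x = w"
    and "\<And>x'. psi x' = y \<Longrightarrow> w \<le> hamming_wt x'"
  shows "quot_wt psi y = w"
  unfolding quot_wt_def using assms by (intro Min_eqI) auto

theorem lemma4p1:
  fixes psi :: "'a::{field,finite} ^ 'm \<Rightarrow> 'a ^ 'n"
  assumes "CARD('n) \<le> CARD('m)"
    and "Vector_Spaces.linear (*s) (*s) psi"
    and "surj psi"
    and "weakly_row_monomial psi"
  shows "\<forall>y. quot_wt psi y = hamming_wt y"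
proof
  fix y :: "'a ^ 'n"
  obtain x where "psi x = y" and "hamming_wt x = hamming_wt y"
    using surj_row_monomial_preimage_same_hamming_wt[OF assms(2-4)] .
  moreover have "hamming_wt y \<le> hamming_wt x'" if "psi x' = y" for x'
    using hamming_wt_row_monomial_le[OF assms(2,4), of x'] that by simp
  ultimately show "quot_wt psi y = hamming_wt y"
    by (rule quot_wt_eqI)
qed

end
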